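(* Let $K$ be a field of characteristic $0$, let $S=K[x_1,\ldots,x_n]$ be graded by $\deg x_i=a_i>0$, and let $I,J\subsetneq S$ be graded ideals. Call a graded ideal $\mathfrak a\subset S$ strongly Golod if $\partial(\mathfrak a)^2\subseteq \mathfrak a$, where $\partial(\mathfrak a)$ is the ideal generated by all $\partial f/\partial x_i$ with $f\in\mathfrak a$, $1\le i\le n$. Then: (a) if $I$ and $J$ are strongly Golod, then $I\cap J$ and $IJ$ are strongly Golod; (b) if $I$ and $J$ are strongly Golod and $\partial(I)\partial(J)\subseteq I+J$, then $I+J$ is strongly Golod; (c) if $I$ is strongly Golod, $J$ is arbitrary, and $I:J=I:J^2$, then $I:J$ is strongly Golod; (d) $I^k$, $I^{(k)}$ and $\widetilde{I^k}$ are strongly Golod for all $k\ge 2$.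
   Context: Here $I^{(k)}=\bigcup_{t\ge1} I^k:L^t$, where $L$ is the intersection of all associated, non-minimal prime ideals of $I^k$ (the $k$-th symbolic power), and $\widetilde{I^k}=\bigcup_{t\ge1} I^k:\mathfrak m^t$ where $\mathfrak m=(x_1,\ldots,x_n)$ (the $k$-th saturated power). *)

theory Defs
  imports Main "HOL-Library.Poly_Mapping"
begin

text \<open>Polynomial ring S = K[x_v | v in 'v] with a finite type 'v of variables
 (n = CARD('v)); a polynomial is a finitely supported map from monomials
 (exponent vectors 'v =>0 nat) to coefficients.\<close>

type_synonym ('v, 'k) mpoly = "('v \<Rightarrow>\<^sub>0 nat) \<Rightarrow>\<^sub>0 'k"

definition var :: "'v \<Rightarrow> ('v, 'k::comm_ring_1) mpoly" where
  "var i = Poly_Mapping.single (Poly_Mapping.single i 1) 1"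

definition pdiff :: "'v \<Rightarrow> ('v, 'k::comm_ring_1) mpoly \<Rightarrow> ('v, 'k) mpoly" where
  "pdiff i f = (\<Sum>m\<in>Poly_Mapping.keys f.
      Poly_Mapping.single (m - Poly_Mapping.single i (1::nat))
        ((of_nat (Poly_Mapping.lookup m i) :: 'k) * Poly_Mapping.lookup f m))"

definition is_ideal :: "'a::comm_ring_1 set \<Rightarrow> bool" where
  "is_ideal I \<longleftrightarrow> 0 \<in> I \<and> (\<forall>f\<in>I. \<forall>g\<in>I. f + g \<in> I) \<and> (\<forall>f\<in>I. \<forall>r. r * f \<in> I)"

definition ideal_gen :: "'a::comm_ring_1 set \<Rightarrow> 'a set" where
  "ideal_gen X = \<Inter>{J. is_ideal J \<and> X \<subseteq> J}"

definition ideal_sum :: "'a::comm_ring_1 set \<Rightarrow> 'a set \<Rightarrow> 'a set" where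
  "ideal_sum I J = {f + g |f g. f \<in> I \<and> g \<in> J}"

definition ideal_prod :: "'a::comm_ring_1 set \<Rightarrow> 'a set \<Rightarrow> 'a set" where
  "ideal_prod I J = ideal_gen {f * g |f g. f \<in> I \<and> g \<in> J}"

fun ideal_pow :: "'a::comm_ring_1 set \<Rightarrow> nat \<Rightarrow> 'a set" where
  "ideal_pow I 0 = UNIV"
| "ideal_pow I (Suc k) = ideal_prod I (ideal_pow I k)"

definition ideal_colon :: "'a::comm_ring_1 set \<Rightarrow> 'a set \<Rightarrow> 'a set" where
  "ideal_colon I J = {f. \<forall>g\<in>J. f * g \<in> I}"

definition is_prime_ideal :: "'a::comm_ring_1 set \<Rightarrow> bool" where
  "is_prime_ideal P \<longleftrightarrow> is_ideal P \<and> P \<noteq> UNIV \<and> (\<forall>f g. f * g \<in> P \<longrightarrow> f \<in> P \<or> g \<in> P)"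

definition associated_prime :: "'a::comm_ring_1 set \<Rightarrow> 'a set \<Rightarrow> bool" where
  "associated_prime I P \<longleftrightarrow> is_prime_ideal P \<and> (\<exists>f. P = ideal_colon I {f})"

definition minimal_prime :: "'a::comm_ring_1 set \<Rightarrow> 'a set \<Rightarrow> bool" where
  "minimal_prime I P \<longleftrightarrow> is_prime_ideal P \<and> I \<subseteq> P \<and>
     (\<forall>Q. is_prime_ideal Q \<and> I \<subseteq> Q \<and> Q \<subseteq> P \<longrightarrow> Q = P)"

text \<open>k-th symbolic power: union over t of I^k : L^t, L the intersection of the
  associated non-minimal primes of I^k (L = S if there are none).\<close>
definition symbolic_power :: "'a::comm_ring_1 set \<Rightarrow> nat \<Rightarrow> 'a set" where
  "symbolic_power I k =
     (let L = \<Inter>{P. associated_prime (ideal_pow I k) P \<and> \<not> minimal_prime (ideal_pow I k) P}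
      in \<Union>t\<in>{1..}. ideal_colon (ideal_pow I k) (ideal_pow L t))"

definition max_ideal :: "('v, 'k::comm_ring_1) mpoly set" where
  "max_ideal = ideal_gen (range var)"

definition saturated_power :: "('v, 'k::comm_ring_1) mpoly set \<Rightarrow> nat \<Rightarrow> ('v, 'k) mpoly set" where
  "saturated_power I k = (\<Union>t\<in>{1..}. ideal_colon (ideal_pow I k) (ideal_pow max_ideal t))"

definition wdeg :: "('v \<Rightarrow> nat) \<Rightarrow> ('v \<Rightarrow>\<^sub>0 nat) \<Rightarrow> nat" where
  "wdeg a m = (\<Sum>v\<in>Poly_Mapping.keys m. a v * Poly_Mapping.lookup m v)"

definition hcomp :: "('v \<Rightarrow> nat) \<Rightarrow> nat \<Rightarrow> ('v, 'k::comm_ring_1) mpoly \<Rightarrow> ('v, 'k) mpoly" where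
  "hcomp a d f = (\<Sum>m\<in>{m\<in>Poly_Mapping.keys f. wdeg a m = d}. Poly_Mapping.single m (Poly_Mapping.lookup f m))"

definition graded_ideal :: "('v \<Rightarrow> nat) \<Rightarrow> ('v, 'k::comm_ring_1) mpoly set \<Rightarrow> bool" where
  "graded_ideal a I \<longleftrightarrow> is_ideal I \<and> (\<forall>f\<in>I. \<forall>d. hcomp a d f \<in> I)"

definition deriv_ideal :: "('v, 'k::comm_ring_1) mpoly set \<Rightarrow> ('v, 'k) mpoly set" where
  "deriv_ideal I = ideal_gen {pdiff i f |i f. f \<in> I}"

definition strongly_golod :: "('v, 'k::comm_ring_1) mpoly set \<Rightarrow> bool" where
  "strongly_golod I \<longleftrightarrow> ideal_prod (deriv_ideal I) (deriv_ideal I) \<subseteq> I"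

end

theory Submission
  imports Defs
begin

text \<open>Everything follows from the Leibniz rule and ideal arithmetic. The Leibniz rule gives
  \<partial>(IJ) \<subseteq> IJ + \<partial>(I)J + I\<partial>(J), whose square lies in IJ, and \<partial>(I + J) \<subseteq> \<partial>(I) + \<partial>(J).
  For Q = I : J the hypothesis gives Q : J = Q; for f, g \<in> Q and h1, h2, h3 \<in> J, expanding
  \<partial>_i(f h1) \<partial>_j(g h2) h3 \<in> I shows \<partial>_i f \<partial>_j g h1 h2 h3 \<in> I, that is \<partial>_i f \<partial>_j g \<in> Q.
  Finally \<partial>(I^k) \<subseteq> I^(k-1) and (I^(k-1))^2 \<subseteq> I^k for k \<ge> 2. The symbolic and the saturated
  powers are both of the form I^k : L^\<infinity>, and differentiation maps I^k : L^t into
  I^(k-1) : L^(t+1), so the same argument applies to them.\<close>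

section \<open>The Leibniz rule\<close>

lemma pdiff_eq_sum_superset:
  fixes f :: "('v, 'k::comm_ring_1) mpoly"
  assumes "finite S" "Poly_Mapping.keys f \<subseteq> S"
  shows "pdiff i f = (\<Sum>m\<in>S. Poly_Mapping.single (m - Poly_Mapping.single i 1)
           (of_nat (Poly_Mapping.lookup m i) * Poly_Mapping.lookup f m))"
  unfolding pdiff_def using assms
  by (intro sum.mono_neutral_left) (auto simp: in_keys_iff)

lemma pdiff_add: "pdiff i (f + g) = pdiff i f + pdiff i (g :: ('v, 'k::comm_ring_1) mpoly)"
proof -
  let ?S = "Poly_Mapping.keys f \<union> Poly_Mapping.keys g"
  have "Poly_Mapping.keys (f + g) \<subseteq> ?S" by (rule keys_add)
  then show ?thesis
    by (simp add: pdiff_eq_sum_superset[of ?S] lookup_add distrib_left single_add sum.distrib)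
qed

lemma pdiff_0 [simp]: "pdiff i (0 :: ('v, 'k::comm_ring_1) mpoly) = 0"
  by (simp add: pdiff_def)

lemma pdiff_sum: "pdiff i (sum F A) = (\<Sum>x\<in>A. pdiff i (F x :: ('v, 'k::comm_ring_1) mpoly))"
  by (induction A rule: infinite_finite_induct) (simp_all add: pdiff_add)

lemma pdiff_single:
  "pdiff i (Poly_Mapping.single m c :: ('v, 'k::comm_ring_1) mpoly) =
     Poly_Mapping.single (m - Poly_Mapping.single i 1) (of_nat (Poly_Mapping.lookup m i) * c)"
  by (subst pdiff_eq_sum_superset[of "{m}"]) auto

lemma diff_single_add:
  fixes m n :: "'v \<Rightarrow>\<^sub>0 nat"
  assumes "Poly_Mapping.lookup m i > 0"
  shows "m - Poly_Mapping.single i 1 + n = m + n - Poly_Mapping.single i 1"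
  using assms
  by (intro poly_mapping_eqI) (auto simp: lookup_add lookup_minus lookup_single when_def)

lemma pdiff_single_mult_single:
  fixes c d :: "'k::comm_ring_1"
  shows "pdiff i (Poly_Mapping.single m c * Poly_Mapping.single n d :: ('v, 'k) mpoly)
     = pdiff i (Poly_Mapping.single m c) * Poly_Mapping.single n d
       + Poly_Mapping.single m c * pdiff i (Poly_Mapping.single n d)"
proof -
  let ?e = "Poly_Mapping.single i (1::nat)"
  \<comment> \<open>if x_i does not divide the monomial, its coefficient vanishes, so the exponent is irrelevant\<close>
  have left: "Poly_Mapping.single (m - ?e + n) (of_nat (Poly_Mapping.lookup m i) * c * d)
      = Poly_Mapping.single (m + n - ?e) (of_nat (Poly_Mapping.lookup m i) * c * d)"
    using diff_single_add[of m i n] by (cases "Poly_Mapping.lookup m i = 0") auto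
  have right: "Poly_Mapping.single (m + (n - ?e)) (c * (of_nat (Poly_Mapping.lookup n i) * d))
      = Poly_Mapping.single (m + n - ?e) (c * (of_nat (Poly_Mapping.lookup n i) * d))"
    using diff_single_add[of n i m] by (cases "Poly_Mapping.lookup n i = 0") (auto simp: add.commute)
  show ?thesis
    unfolding mult_single pdiff_single left right
    by (simp add: lookup_add single_add[symmetric] algebra_simps)
qed

lemma sum_single_lookup: "(\<Sum>m\<in>Poly_Mapping.keys f. Poly_Mapping.single m (Poly_Mapping.lookup f m)) = f"
  by (rule poly_mapping_eqI) (auto simp: lookup_sum lookup_single when_def in_keys_iff)

lemma pdiff_mult: "pdiff i (f * g) = pdiff i f * g + f * pdiff i (g :: ('v, 'k::comm_ring_1) mpoly)"
proof -
  let ?F = "\<lambda>m. Poly_Mapping.single m (Poly_Mapping.lookup f m)"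
  let ?G = "\<lambda>m. Poly_Mapping.single m (Poly_Mapping.lookup g m)"
  have "pdiff i ((\<Sum>m\<in>Poly_Mapping.keys f. ?F m) * (\<Sum>n\<in>Poly_Mapping.keys g. ?G n))
      = pdiff i (\<Sum>m\<in>Poly_Mapping.keys f. ?F m) * (\<Sum>n\<in>Poly_Mapping.keys g. ?G n)
        + (\<Sum>m\<in>Poly_Mapping.keys f. ?F m) * pdiff i (\<Sum>n\<in>Poly_Mapping.keys g. ?G n)"
    by (simp add: sum_product pdiff_sum pdiff_single_mult_single sum.distrib)
  then show ?thesis by (simp only: sum_single_lookup)
qed

section \<open>Ideal arithmetic\<close>

lemma ideal_0: "is_ideal I \<Longrightarrow> 0 \<in> I"
  unfolding is_ideal_def by blast

lemma ideal_add: "is_ideal I \<Longrightarrow> f \<in> I \<Longrightarrow> g \<in> I \<Longrightarrow> f + g \<in> I"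
  unfolding is_ideal_def by blast

lemma ideal_mult_left: "is_ideal I \<Longrightarrow> f \<in> I \<Longrightarrow> r * f \<in> I"
  unfolding is_ideal_def by blast

lemma ideal_mult_right: "is_ideal I \<Longrightarrow> f \<in> I \<Longrightarrow> f * r \<in> I"
  unfolding is_ideal_def by (simp add: mult.commute)

lemma ideal_diff: "is_ideal I \<Longrightarrow> f \<in> I \<Longrightarrow> g \<in> I \<Longrightarrow> f - g \<in> I"
  using ideal_add[of I f "(-1) * g"] ideal_mult_left[of I g "-1"] by simp

lemma is_ideal_UNIV: "is_ideal UNIV"
  by (simp add: is_ideal_def)

lemma is_ideal_ideal_gen: "is_ideal (ideal_gen X)"
  unfolding ideal_gen_def is_ideal_def by auto

lemma ideal_gen_superset: "X \<subseteq> ideal_gen X"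
  unfolding ideal_gen_def by blast

lemma ideal_gen_least: "is_ideal J \<Longrightarrow> X \<subseteq> J \<Longrightarrow> ideal_gen X \<subseteq> J"
  unfolding ideal_gen_def by blast

lemma is_ideal_ideal_colon: "is_ideal I \<Longrightarrow> is_ideal (ideal_colon I J)"
  unfolding is_ideal_def ideal_colon_def by (auto simp: distrib_right mult.assoc)

lemma ideal_colon_mono: "I \<subseteq> I' \<Longrightarrow> J' \<subseteq> J \<Longrightarrow> ideal_colon I J \<subseteq> ideal_colon I' J'"
  unfolding ideal_colon_def by blast

lemma is_ideal_ideal_prod: "is_ideal (ideal_prod I J)"
  unfolding ideal_prod_def by (rule is_ideal_ideal_gen)

lemma ideal_prod_mem: "f \<in> I \<Longrightarrow> g \<in> J \<Longrightarrow> f * g \<in> ideal_prod I J"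
  unfolding ideal_prod_def by (rule subsetD[OF ideal_gen_superset]) blast

lemma ideal_prod_subsetI:
  "is_ideal K \<Longrightarrow> (\<And>f g. f \<in> I \<Longrightarrow> g \<in> J \<Longrightarrow> f * g \<in> K) \<Longrightarrow> ideal_prod I J \<subseteq> K"
  unfolding ideal_prod_def by (rule ideal_gen_least) auto

lemma ideal_prod_ideal_gen_subsetI:
  assumes K: "is_ideal K" and AB: "\<And>a b. a \<in> A \<Longrightarrow> b \<in> B \<Longrightarrow> a * b \<in> K"
  shows "ideal_prod (ideal_gen A) (ideal_gen B) \<subseteq> K"
proof -
  have "ideal_gen B \<subseteq> ideal_colon K {a}" if "a \<in> A" for a
    using AB[OF that] by (intro ideal_gen_least is_ideal_ideal_colon K)
      (auto simp: ideal_colon_def mult.commute[of _ a])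
  then have "ideal_gen A \<subseteq> ideal_colon K (ideal_gen B)"
    by (intro ideal_gen_least is_ideal_ideal_colon K) (fastforce simp: ideal_colon_def mult.commute)
  then show ?thesis
    by (intro ideal_prod_subsetI K) (auto simp: ideal_colon_def)
qed

lemma ideal_prod_ideal_prod_subsetI:
  assumes "is_ideal K"
    and "\<And>a b c d. a \<in> A \<Longrightarrow> b \<in> B \<Longrightarrow> c \<in> C \<Longrightarrow> d \<in> D \<Longrightarrow> (a * b) * (c * d) \<in> K"
  shows "ideal_prod (ideal_prod A B) (ideal_prod C D) \<subseteq> K"
  unfolding ideal_prod_def[of A] ideal_prod_def[of C]
  using assms by (intro ideal_prod_ideal_gen_subsetI) auto

lemma ideal_prod_mono: "I \<subseteq> I' \<Longrightarrow> J \<subseteq> J' \<Longrightarrow> ideal_prod I J \<subseteq> ideal_prod I' J'"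
  by (intro ideal_prod_subsetI is_ideal_ideal_prod) (auto intro: ideal_prod_mem)

lemma ideal_prod_commute: "ideal_prod I J = ideal_prod J I"
proof -
  have "ideal_prod X Y \<subseteq> ideal_prod Y X" for X Y :: "'a set"
    by (intro ideal_prod_subsetI is_ideal_ideal_prod) (metis ideal_prod_mem mult.commute)
  then show ?thesis by blast
qed

lemma ideal_prod_subset_right: "is_ideal J \<Longrightarrow> ideal_prod I J \<subseteq> J"
  by (rule ideal_prod_subsetI) (auto intro: ideal_mult_left)

lemma ideal_prod_subset_left: "is_ideal I \<Longrightarrow> ideal_prod I J \<subseteq> I"
  by (metis ideal_prod_commute ideal_prod_subset_right)

lemma ideal_prod_assoc_subset: "ideal_prod A (ideal_prod B C) \<subseteq> ideal_prod (ideal_prod A B) C"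
proof -
  have "ideal_prod A (ideal_prod B C) \<subseteq> ideal_prod (ideal_gen A) (ideal_prod B C)"
    by (rule ideal_prod_mono[OF ideal_gen_superset order_refl])
  also have "\<dots> \<subseteq> ideal_prod (ideal_prod A B) C"
    unfolding ideal_prod_def[of B]
    by (intro ideal_prod_ideal_gen_subsetI is_ideal_ideal_prod)
      (auto, metis ideal_prod_mem mult.assoc)
  finally show ?thesis .
qed

lemma ideal_prod_assoc: "ideal_prod (ideal_prod A B) C = ideal_prod A (ideal_prod B C)"
proof
  have "ideal_prod (ideal_prod A B) C = ideal_prod C (ideal_prod B A)"
    by (simp add: ideal_prod_commute)
  also have "\<dots> \<subseteq> ideal_prod (ideal_prod C B) A"
    by (rule ideal_prod_assoc_subset)
  also have "\<dots> = ideal_prod A (ideal_prod B C)"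
    by (simp add: ideal_prod_commute)
  finally show "ideal_prod (ideal_prod A B) C \<subseteq> ideal_prod A (ideal_prod B C)" .
qed (rule ideal_prod_assoc_subset)

lemma ideal_prod_UNIV_left: "is_ideal J \<Longrightarrow> ideal_prod UNIV J = J"
  using ideal_prod_mem[of 1 UNIV _ J] by (auto dest: subsetD[OF ideal_prod_subset_right])

lemma is_ideal_ideal_sum:
  assumes I: "is_ideal I" and J: "is_ideal J"
  shows "is_ideal (ideal_sum I J)"
  unfolding is_ideal_def
proof (intro conjI ballI allI)
  show "0 \<in> ideal_sum I J"
    using ideal_0[OF I] ideal_0[OF J] unfolding ideal_sum_def by force
next
  fix x y assume "x \<in> ideal_sum I J" "y \<in> ideal_sum I J"
  then obtain a b c d where "x = a + b" "y = c + d" "a \<in> I" "b \<in> J" "c \<in> I" "d \<in> J"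
    unfolding ideal_sum_def by blast
  then have "x + y = (a + c) + (b + d)" "a + c \<in> I" "b + d \<in> J"
    by (simp_all add: ideal_add I J ac_simps)
  then show "x + y \<in> ideal_sum I J"
    unfolding ideal_sum_def by blast
next
  fix x r assume "x \<in> ideal_sum I J"
  then obtain a b where "x = a + b" "a \<in> I" "b \<in> J"
    unfolding ideal_sum_def by blast
  then have "r * x = r * a + r * b" "r * a \<in> I" "r * b \<in> J"
    by (simp_all add: ideal_mult_left I J distrib_left)
  then show "r * x \<in> ideal_sum I J"
    unfolding ideal_sum_def by blast
qed

lemma ideal_sum_subsetI: "is_ideal K \<Longrightarrow> I \<subseteq> K \<Longrightarrow> J \<subseteq> K \<Longrightarrow> ideal_sum I J \<subseteq> K"
  unfolding ideal_sum_def is_ideal_def by blast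

lemma ideal_sum_upper1: "is_ideal J \<Longrightarrow> I \<subseteq> ideal_sum I J"
  unfolding ideal_sum_def is_ideal_def by force

lemma ideal_sum_upper2: "is_ideal I \<Longrightarrow> J \<subseteq> ideal_sum I J"
  unfolding ideal_sum_def is_ideal_def by force

lemma ideal_prod_ideal_sum_left_subsetI:
  assumes K: "is_ideal K" and "ideal_prod A C \<subseteq> K" "ideal_prod B C \<subseteq> K"
  shows "ideal_prod (ideal_sum A B) C \<subseteq> K"
proof (rule ideal_prod_subsetI[OF K])
  fix f g assume "f \<in> ideal_sum A B" "g \<in> C"
  then obtain a b where "f = a + b" "a \<in> A" "b \<in> B"
    unfolding ideal_sum_def by blast
  then have "a * g \<in> K" "b * g \<in> K"
    using assms \<open>g \<in> C\<close> ideal_prod_mem by blast+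
  with \<open>f = a + b\<close> show "f * g \<in> K"
    by (simp add: distrib_right ideal_add[OF K])
qed

lemma ideal_prod_ideal_sum_right_subsetI:
  "is_ideal K \<Longrightarrow> ideal_prod C A \<subseteq> K \<Longrightarrow> ideal_prod C B \<subseteq> K \<Longrightarrow> ideal_prod C (ideal_sum A B) \<subseteq> K"
  using ideal_prod_ideal_sum_left_subsetI[of K A C B] by (simp add: ideal_prod_commute)

lemma ideal_colon_mult_mem:
  assumes "x \<in> ideal_colon A C" "y \<in> ideal_colon B D"
  shows "x * y \<in> ideal_colon (ideal_prod A B) (ideal_prod C D)"
proof -
  have "ideal_prod C D \<subseteq> ideal_colon (ideal_prod A B) {x * y}"
  proof (rule ideal_prod_subsetI[OF is_ideal_ideal_colon[OF is_ideal_ideal_prod]])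
    fix c d assume "c \<in> C" "d \<in> D"
    then have "(x * c) * (y * d) \<in> ideal_prod A B"
      using assms by (intro ideal_prod_mem) (auto simp: ideal_colon_def)
    then show "c * d \<in> ideal_colon (ideal_prod A B) {x * y}"
      by (simp add: ideal_colon_def ac_simps)
  qed
  then show ?thesis
    by (auto simp: ideal_colon_def mult.commute)
qed

lemma is_ideal_ideal_pow: "is_ideal (ideal_pow L n)"
  by (cases n) (simp_all add: is_ideal_UNIV is_ideal_ideal_prod)

lemma ideal_pow_antimono: "m \<le> n \<Longrightarrow> ideal_pow L n \<subseteq> ideal_pow L m"
proof (induction n rule: dec_induct)
  case (step n)
  then show ?case
    using ideal_prod_subset_right[OF is_ideal_ideal_pow, of L "L" n] by simp
qed simp

lemma ideal_pow_add: "ideal_pow L (m + n) = ideal_prod (ideal_pow L m) (ideal_pow L n)"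
  by (induction m) (simp_all add: ideal_prod_UNIV_left is_ideal_ideal_pow ideal_prod_assoc)

lemma ideal_pow_2: "is_ideal J \<Longrightarrow> ideal_pow J 2 = ideal_prod J J"
  by (simp add: numeral_2_eq_2 ideal_prod_commute[of J UNIV] ideal_prod_UNIV_left)

lemma ideal_colon_ideal_colon:
  assumes I: "is_ideal I" and J: "is_ideal J"
  shows "ideal_colon (ideal_colon I J) J = ideal_colon I (ideal_pow J 2)"
proof
  show "ideal_colon (ideal_colon I J) J \<subseteq> ideal_colon I (ideal_pow J 2)"
  proof
    fix y assume y: "y \<in> ideal_colon (ideal_colon I J) J"
    have "ideal_prod J J \<subseteq> ideal_colon I {y}"
      using y by (intro ideal_prod_subsetI is_ideal_ideal_colon I) (auto simp: ideal_colon_def ac_simps)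
    then show "y \<in> ideal_colon I (ideal_pow J 2)"
      by (auto simp: ideal_pow_2[OF J] ideal_colon_def mult.commute)
  qed
  show "ideal_colon I (ideal_pow J 2) \<subseteq> ideal_colon (ideal_colon I J) J"
    by (auto simp: ideal_pow_2[OF J] ideal_colon_def mult.assoc intro: ideal_prod_mem)
qed

section \<open>The ideal of partial derivatives\<close>

lemma is_ideal_deriv_ideal: "is_ideal (deriv_ideal X)"
  unfolding deriv_ideal_def by (rule is_ideal_ideal_gen)

lemma pdiff_mem_deriv_ideal: "f \<in> X \<Longrightarrow> pdiff i f \<in> deriv_ideal X"
  unfolding deriv_ideal_def by (rule subsetD[OF ideal_gen_superset]) blast

lemma deriv_ideal_subsetI:
  "is_ideal K \<Longrightarrow> (\<And>i f. f \<in> X \<Longrightarrow> pdiff i f \<in> K) \<Longrightarrow> deriv_ideal X \<subseteq> K"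
  unfolding deriv_ideal_def by (rule ideal_gen_least) auto

lemma deriv_ideal_mono: "X \<subseteq> Y \<Longrightarrow> deriv_ideal X \<subseteq> deriv_ideal Y"
  by (rule deriv_ideal_subsetI[OF is_ideal_deriv_ideal]) (auto intro: pdiff_mem_deriv_ideal)

text \<open>Since \<partial>_i(r g) = (\<partial>_i r) g + r \<partial>_i g, it suffices to check the generators.\<close>

lemma deriv_ideal_ideal_gen_subsetI:
  fixes G K :: "('v, 'k::comm_ring_1) mpoly set"
  assumes K: "is_ideal K" and "G \<subseteq> K" and "\<And>i g. g \<in> G \<Longrightarrow> pdiff i g \<in> K"
  shows "deriv_ideal (ideal_gen G) \<subseteq> K"
proof -
  let ?M = "{h \<in> K. \<forall>i. pdiff i h \<in> K}"
  have "is_ideal ?M"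
    using K unfolding is_ideal_def by (simp add: pdiff_add pdiff_mult)
  then have "ideal_gen G \<subseteq> ?M"
    using assms by (intro ideal_gen_least) auto
  then show ?thesis
    by (intro deriv_ideal_subsetI[OF K]) blast
qed

lemma deriv_ideal_ideal_prod_subset:
  fixes X Y :: "('v, 'k::comm_ring_1) mpoly set"
  shows "deriv_ideal (ideal_prod X Y) \<subseteq>
    ideal_sum (ideal_sum (ideal_prod X Y) (ideal_prod (deriv_ideal X) Y)) (ideal_prod X (deriv_ideal Y))"
    (is "_ \<subseteq> ideal_sum (ideal_sum ?P ?Q) ?R")
proof -
  let ?K = "ideal_sum (ideal_sum ?P ?Q) ?R"
  have K: "is_ideal ?K"
    by (intro is_ideal_ideal_sum is_ideal_ideal_prod)
  have "ideal_sum ?P ?Q \<subseteq> ?K" and R: "?R \<subseteq> ?K"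
    by (intro ideal_sum_upper1 ideal_sum_upper2 is_ideal_ideal_prod is_ideal_ideal_sum)+
  then have P: "?P \<subseteq> ?K" and Q: "?Q \<subseteq> ?K"
    using ideal_sum_upper1[OF is_ideal_ideal_prod, of ?P] ideal_sum_upper2[OF is_ideal_ideal_prod, of ?Q]
    by blast+
  show ?thesis
  proof (rule deriv_ideal_ideal_gen_subsetI[OF K, of "{f * g |f g. f \<in> X \<and> g \<in> Y}", folded ideal_prod_def])
    show "{f * g |f g. f \<in> X \<and> g \<in> Y} \<subseteq> ?K"
      using P ideal_prod_mem by blast
  next
    fix i h assume "h \<in> {f * g |f g. f \<in> X \<and> g \<in> Y}"
    then obtain f g where "h = f * g" "f \<in> X" "g \<in> Y" by blast
    then have "pdiff i f * g \<in> ?K" "f * pdiff i g \<in> ?K"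
      using Q R by (auto intro!: ideal_prod_mem pdiff_mem_deriv_ideal)
    with \<open>h = f * g\<close> show "pdiff i h \<in> ?K"
      by (simp add: pdiff_mult ideal_add[OF K])
  qed
qed

lemma deriv_ideal_ideal_pow_subset:
  fixes L :: "('v, 'k::comm_ring_1) mpoly set"
  shows "deriv_ideal (ideal_pow L (Suc n)) \<subseteq> ideal_pow L n"
proof (induction n)
  case (Suc n)
  let ?T = "ideal_pow L (Suc n)"
  have LdT: "ideal_prod L (deriv_ideal ?T) \<subseteq> ?T"
    using ideal_prod_mono[OF order_refl Suc.IH, of L] by simp
  have "deriv_ideal (ideal_pow L (Suc (Suc n))) \<subseteq>
      ideal_sum (ideal_sum (ideal_prod L ?T) (ideal_prod (deriv_ideal L) ?T)) (ideal_prod L (deriv_ideal ?T))"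
    using deriv_ideal_ideal_prod_subset[of L ?T] by (simp only: ideal_pow.simps)
  also have "\<dots> \<subseteq> ?T"
    by (intro ideal_sum_subsetI is_ideal_ideal_sum is_ideal_ideal_pow ideal_prod_subset_right LdT)
  finally show ?case .
qed simp

section \<open>Strongly Golod ideals\<close>

lemma strongly_golodI:
  fixes I :: "('v, 'k::comm_ring_1) mpoly set"
  assumes "is_ideal I" and "\<And>f g i j. f \<in> I \<Longrightarrow> g \<in> I \<Longrightarrow> pdiff i f * pdiff j g \<in> I"
  shows "strongly_golod I"
  unfolding strongly_golod_def deriv_ideal_def
  using assms by (intro ideal_prod_ideal_gen_subsetI) auto

lemma strongly_golodD:
  "strongly_golod I \<Longrightarrow> a \<in> deriv_ideal I \<Longrightarrow> c \<in> deriv_ideal I \<Longrightarrow> a * c \<in> I"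
  unfolding strongly_golod_def using ideal_prod_mem by blast

lemma strongly_golod_Int:
  assumes "strongly_golod I" "strongly_golod J"
  shows "strongly_golod (I \<inter> J)"
proof -
  have "ideal_prod (deriv_ideal (I \<inter> J)) (deriv_ideal (I \<inter> J)) \<subseteq> ideal_prod (deriv_ideal X) (deriv_ideal X)"
    if "X \<in> {I, J}" for X
    using that by (intro ideal_prod_mono deriv_ideal_mono) auto
  with assms show ?thesis
    unfolding strongly_golod_def by blast
qed

lemma strongly_golod_ideal_prod:
  fixes I J :: "('v, 'k::comm_ring_1) mpoly set"
  assumes I: "is_ideal I" and J: "is_ideal J" and sI: "strongly_golod I" and sJ: "strongly_golod J"
  shows "strongly_golod (ideal_prod I J)"
proof -
  let ?P = "ideal_prod I J"
  let ?Q = "ideal_prod (deriv_ideal I) J"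
  let ?R = "ideal_prod I (deriv_ideal J)"
  have P: "is_ideal ?P" by (rule is_ideal_ideal_prod)
  have PX: "ideal_prod ?P X \<subseteq> ?P" and XP: "ideal_prod X ?P \<subseteq> ?P" for X
    by (rule ideal_prod_subset_left[OF P], rule ideal_prod_subset_right[OF P])
  have QQ: "ideal_prod ?Q ?Q \<subseteq> ?P"
  proof (rule ideal_prod_ideal_prod_subsetI[OF P])
    fix a b c d assume "a \<in> deriv_ideal I" "b \<in> J" "c \<in> deriv_ideal I" "d \<in> J"
    then have "(a * c) * (b * d) \<in> ?P"
      by (intro ideal_prod_mem strongly_golodD[OF sI] ideal_mult_right[OF J])
    then show "(a * b) * (c * d) \<in> ?P" by (simp add: ac_simps)
  qed
  have QR: "ideal_prod ?Q ?R \<subseteq> ?P"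
  proof (rule ideal_prod_ideal_prod_subsetI[OF P])
    fix a b c d assume "a \<in> deriv_ideal I" "b \<in> J" "c \<in> I" "d \<in> deriv_ideal J"
    then have "c * (b * (a * d)) \<in> ?P"
      by (intro ideal_prod_mem ideal_mult_right[OF J])
    then show "(a * b) * (c * d) \<in> ?P" by (simp add: ac_simps)
  qed
  have RQ: "ideal_prod ?R ?Q \<subseteq> ?P"
    using QR by (simp add: ideal_prod_commute)
  have RR: "ideal_prod ?R ?R \<subseteq> ?P"
  proof (rule ideal_prod_ideal_prod_subsetI[OF P])
    fix a b c d assume "a \<in> I" "b \<in> deriv_ideal J" "c \<in> I" "d \<in> deriv_ideal J"
    then have "(a * c) * (b * d) \<in> ?P"
      by (intro ideal_prod_mem strongly_golodD[OF sJ] ideal_mult_right[OF I])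
    then show "(a * b) * (c * d) \<in> ?P" by (simp add: ac_simps)
  qed
  have "ideal_prod (ideal_sum (ideal_sum ?P ?Q) ?R) (ideal_sum (ideal_sum ?P ?Q) ?R) \<subseteq> ?P"
    by (intro ideal_prod_ideal_sum_left_subsetI ideal_prod_ideal_sum_right_subsetI P PX XP QQ QR RQ RR)
  with deriv_ideal_ideal_prod_subset[of I J] show ?thesis
    unfolding strongly_golod_def by (meson ideal_prod_mono order_trans)
qed

lemma strongly_golod_ideal_sum:
  fixes I J :: "('v, 'k::comm_ring_1) mpoly set"
  assumes I: "is_ideal I" and J: "is_ideal J" and sI: "strongly_golod I" and sJ: "strongly_golod J"
    and IJ: "ideal_prod (deriv_ideal I) (deriv_ideal J) \<subseteq> ideal_sum I J"
  shows "strongly_golod (ideal_sum I J)"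
proof (rule strongly_golodI)
  let ?S = "ideal_sum I J"
  show S: "is_ideal ?S" using I J by (rule is_ideal_ideal_sum)
  fix f g i j assume "f \<in> ?S" "g \<in> ?S"
  then obtain f1 f2 g1 g2 where f: "f = f1 + f2" "f1 \<in> I" "f2 \<in> J" and g: "g = g1 + g2" "g1 \<in> I" "g2 \<in> J"
    unfolding ideal_sum_def by blast
  have "pdiff i f1 * pdiff j g1 \<in> ?S" "pdiff i f2 * pdiff j g2 \<in> ?S"
    using strongly_golodD[OF sI] strongly_golodD[OF sJ] f g ideal_sum_upper1[OF J] ideal_sum_upper2[OF I]
    by (blast intro: pdiff_mem_deriv_ideal)+
  moreover have "pdiff i f1 * pdiff j g2 \<in> ?S" "pdiff j g1 * pdiff i f2 \<in> ?S"
    using IJ f g by (blast intro: ideal_prod_mem pdiff_mem_deriv_ideal)+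
  ultimately show "pdiff i f * pdiff j g \<in> ?S"
    using f g by (simp add: pdiff_add algebra_simps ideal_add[OF S])
qed

lemma strongly_golod_ideal_colon:
  fixes I J :: "('v, 'k::comm_ring_1) mpoly set"
  assumes I: "is_ideal I" and J: "is_ideal J" and sI: "strongly_golod I"
    and colon_eq: "ideal_colon I J = ideal_colon I (ideal_pow J 2)"
  shows "strongly_golod (ideal_colon I J)"
proof (rule strongly_golodI)
  let ?Q = "ideal_colon I J"
  show "is_ideal ?Q" by (rule is_ideal_ideal_colon[OF I])
  have QJ: "ideal_colon ?Q J = ?Q"
    using ideal_colon_ideal_colon[OF I J] colon_eq by simp
  fix f g i j assume f: "f \<in> ?Q" and g: "g \<in> ?Q"
  let ?y = "pdiff i f * pdiff j g"
  have "?y * h1 * h2 * h3 \<in> I" if h: "h1 \<in> J" "h2 \<in> J" "h3 \<in> J" for h1 h2 h3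
  proof -
    have fh: "f * h \<in> I" "g * h \<in> I" if "h \<in> J" for h
      using f g that by (auto simp: ideal_colon_def)
    have "pdiff i (f * h1) * pdiff j (g * h2) * h3 \<in> I"
      using h by (intro ideal_mult_right[OF I] strongly_golodD[OF sI] pdiff_mem_deriv_ideal fh)
    moreover have "(g * h1) * (pdiff i f * pdiff j h2 * h3) \<in> I"
      "(f * h2) * (pdiff i h1 * pdiff j g * h3) \<in> I"
      "(f * h3) * (g * pdiff i h1 * pdiff j h2) \<in> I"
      using h by (auto intro: ideal_mult_right[OF I] fh)
    moreover have "?y * h1 * h2 * h3 = pdiff i (f * h1) * pdiff j (g * h2) * h3
        - (g * h1) * (pdiff i f * pdiff j h2 * h3) - (f * h2) * (pdiff i h1 * pdiff j g * h3)
        - (f * h3) * (g * pdiff i h1 * pdiff j h2)"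
      by (simp add: pdiff_mult algebra_simps)
    ultimately show ?thesis
      by (simp add: ideal_diff[OF I])
  qed
  then have "?y \<in> ideal_colon (ideal_colon ?Q J) J"
    by (simp add: ideal_colon_def)
  then show "?y \<in> ?Q"
    by (simp add: QJ)
qed

lemma strongly_golod_ideal_pow:
  fixes I :: "('v, 'k::comm_ring_1) mpoly set"
  assumes "k \<ge> 2"
  shows "strongly_golod (ideal_pow I k)"
proof -
  obtain m where km: "k = Suc (Suc m)" using assms by (metis add_2_eq_Suc le_Suc_ex)
  have "ideal_prod (ideal_pow I (Suc m)) (ideal_pow I (Suc m)) = ideal_pow I (Suc m + Suc m)"
    by (rule ideal_pow_add[symmetric])
  also have "\<dots> \<subseteq> ideal_pow I k"
    unfolding km by (rule ideal_pow_antimono) simp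
  finally show ?thesis
    unfolding strongly_golod_def km
    using ideal_prod_mono[OF deriv_ideal_ideal_pow_subset deriv_ideal_ideal_pow_subset] by blast
qed

text \<open>The saturation A : L^\<infinity>; the symbolic and the saturated powers of I are saturations of I^k.\<close>

definition ideal_saturation :: "'a::comm_ring_1 set \<Rightarrow> 'a set \<Rightarrow> 'a set" where
  "ideal_saturation A L = (\<Union>t\<in>{1..}. ideal_colon A (ideal_pow L t))"

lemma is_ideal_ideal_saturation:
  assumes A: "is_ideal A"
  shows "is_ideal (ideal_saturation A L)"
  unfolding is_ideal_def
proof (intro conjI ballI allI)
  have "0 \<in> ideal_colon A (ideal_pow L 1)"
    by (rule ideal_0[OF is_ideal_ideal_colon[OF A]])
  then show "0 \<in> ideal_saturation A L"
    unfolding ideal_saturation_def by (intro UN_I[of 1]) auto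
next
  fix f g assume "f \<in> ideal_saturation A L" "g \<in> ideal_saturation A L"
  then obtain s t where s: "s \<ge> 1" and f: "f \<in> ideal_colon A (ideal_pow L s)"
    and g: "g \<in> ideal_colon A (ideal_pow L t)"
    unfolding ideal_saturation_def by blast
  have "ideal_colon A (ideal_pow L r) \<subseteq> ideal_colon A (ideal_pow L (s + t))" if "r \<le> s + t" for r
    using that by (intro ideal_colon_mono[OF order_refl] ideal_pow_antimono)
  then have "f \<in> ideal_colon A (ideal_pow L (s + t))" "g \<in> ideal_colon A (ideal_pow L (s + t))"
    using f g by (meson le_add1 le_add2 subsetD)+
  then have "f + g \<in> ideal_colon A (ideal_pow L (s + t))"
    by (rule ideal_add[OF is_ideal_ideal_colon[OF A]])
  with s show "f + g \<in> ideal_saturation A L"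
    unfolding ideal_saturation_def by (intro UN_I[of "s + t"]) auto
next
  fix f r assume "f \<in> ideal_saturation A L"
  then obtain s where "s \<ge> 1" "f \<in> ideal_colon A (ideal_pow L s)"
    unfolding ideal_saturation_def by blast
  moreover from this(2) have "r * f \<in> ideal_colon A (ideal_pow L s)"
    by (rule ideal_mult_left[OF is_ideal_ideal_colon[OF A]])
  ultimately show "r * f \<in> ideal_saturation A L"
    unfolding ideal_saturation_def by blast
qed

lemma pdiff_mem_ideal_colon_pow:
  fixes I L :: "('v, 'k::comm_ring_1) mpoly set"
  assumes f: "f \<in> ideal_colon (ideal_pow I (Suc k)) (ideal_pow L t)"
  shows "pdiff i f \<in> ideal_colon (ideal_pow I k) (ideal_pow L (Suc t))"
  unfolding ideal_colon_def
proof (intro CollectI ballI)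
  fix h assume h: "h \<in> ideal_pow L (Suc t)"
  then have "h \<in> ideal_pow L t"
    using ideal_pow_antimono[of t "Suc t" L] by auto
  then have "pdiff i (f * h) \<in> ideal_pow I k"
    using f deriv_ideal_ideal_pow_subset[of I k]
    by (auto simp: ideal_colon_def intro: pdiff_mem_deriv_ideal)
  moreover have "f * pdiff i h \<in> ideal_pow I k"
    using f h deriv_ideal_ideal_pow_subset[of L t] ideal_pow_antimono[of k "Suc k" I]
    by (auto simp: ideal_colon_def intro: pdiff_mem_deriv_ideal)
  ultimately show "pdiff i f * h \<in> ideal_pow I k"
    using ideal_diff[OF is_ideal_ideal_pow] by (fastforce simp: pdiff_mult)
qed

lemma strongly_golod_ideal_saturation:
  fixes I L :: "('v, 'k::comm_ring_1) mpoly set"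
  assumes "k \<ge> 2"
  shows "strongly_golod (ideal_saturation (ideal_pow I k) L)"
proof (rule strongly_golodI)
  obtain m where km: "k = Suc (Suc m)" using assms by (metis add_2_eq_Suc le_Suc_ex)
  let ?A = "ideal_pow I k" and ?B = "ideal_pow I (Suc m)"
  show "is_ideal (ideal_saturation ?A L)"
    by (rule is_ideal_ideal_saturation[OF is_ideal_ideal_pow])
  fix f g i j assume "f \<in> ideal_saturation ?A L" "g \<in> ideal_saturation ?A L"
  then obtain s t where "s \<ge> 1" "f \<in> ideal_colon ?A (ideal_pow L s)" "g \<in> ideal_colon ?A (ideal_pow L t)"
    unfolding ideal_saturation_def by blast
  then have "pdiff i f * pdiff j g
      \<in> ideal_colon (ideal_prod ?B ?B) (ideal_prod (ideal_pow L (Suc s)) (ideal_pow L (Suc t)))"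
    by (intro ideal_colon_mult_mem pdiff_mem_ideal_colon_pow) (simp_all add: km)
  also have "\<dots> \<subseteq> ideal_colon ?A (ideal_pow L (Suc s + Suc t))"
  proof (rule ideal_colon_mono)
    show "ideal_prod ?B ?B \<subseteq> ?A"
      unfolding ideal_pow_add[symmetric] km by (rule ideal_pow_antimono) simp
  qed (rule equalityD1[OF ideal_pow_add])
  finally show "pdiff i f * pdiff j g \<in> ideal_saturation ?A L"
    unfolding ideal_saturation_def by (intro UN_I[of "Suc s + Suc t"]) auto
qed

theorem theorem2p1:
  fixes a :: "'v::finite \<Rightarrow> nat"
    and I J :: "('v, 'k::field_char_0) mpoly set"
  assumes apos: "\<forall>v. a v > 0"
    and gI: "graded_ideal a I" and pI: "I \<noteq> UNIV"
    and gJ: "graded_ideal a J" and pJ: "J \<noteq> UNIV"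
  shows "(strongly_golod I \<and> strongly_golod J \<longrightarrow>
            strongly_golod (I \<inter> J) \<and> strongly_golod (ideal_prod I J))
       \<and> (strongly_golod I \<and> strongly_golod J \<and>
            ideal_prod (deriv_ideal I) (deriv_ideal J) \<subseteq> ideal_sum I J \<longrightarrow>
            strongly_golod (ideal_sum I J))
       \<and> (strongly_golod I \<and> ideal_colon I J = ideal_colon I (ideal_pow J 2) \<longrightarrow>
            strongly_golod (ideal_colon I J))
       \<and> (\<forall>k\<ge>2. strongly_golod (ideal_pow I k) \<and> strongly_golod (symbolic_power I k)
            \<and> strongly_golod (saturated_power I k))"
proof -
  have I: "is_ideal I" and J: "is_ideal J"
    using gI gJ unfolding graded_ideal_def by blast+
  have "symbolic_power I k = ideal_saturation (ideal_pow I k)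
      (\<Inter>{P. associated_prime (ideal_pow I k) P \<and> \<not> minimal_prime (ideal_pow I k) P})" for k
    unfolding symbolic_power_def ideal_saturation_def Let_def ..
  moreover have "saturated_power I k = ideal_saturation (ideal_pow I k) max_ideal" for k
    unfolding saturated_power_def ideal_saturation_def ..
  show ?thesis
    unfolding symbolic_power_def saturated_power_def Let_def ideal_saturation_def[symmetric]
    using strongly_golod_Int strongly_golod_ideal_prod[OF I J] strongly_golod_ideal_sum[OF I J]
      strongly_golod_ideal_colon[OF I J] strongly_golod_ideal_pow
      strongly_golod_ideal_saturation
    by blast
qed

end
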